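(* For every hypergraph $\mathcal{H}=(Q,\mathcal{S})$ with all hyperedges nonempty and $S_n=Q$, the graph $G'_{\mathcal{H}}$ is $(P_2+P_4)$-free.
   Context: A hypergraph $\mathcal{H}=(Q,\mathcal{S})$ has element set $Q=\{q_1,\dots,q_m\}$ and hyperedges $\mathcal{S}=\{S_1,\dots,S_n\}$, $S_j\subseteq Q$. The graph $G_{\mathcal{H}}$ has vertex set $Q\cup\mathcal{S}\cup\mathcal{S}'\cup\{t_1,t_2\}$, where $\mathcal{S}'=\{S_1',\dots,S_n'\}$ is a set of $n$ new vertices, and edges: $q_iS_j$ and $q_iS_j'$ whenever $q_i\in S_j$; $S_jS_\ell'$ for all $j,\ell$; $q_hq_i$ for all distinct $h,i$; $t_1S_j$ and $t_2S_j'$ for all $j$; no other edges. $G'_{\mathcal{H}}$ is obtained from $G_{\mathcal{H}}$ by adding the edge $t_1t_2$. $P_2+P_4$ is the disjoint union of a path on 2 and a path on 4 vertices; $H$-free means no induced subgraph isomorphic to $H$. *)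

theory Defs
  imports Main
begin

text \<open>Simple graphs are given by a vertex set and a symmetric irreflexive adjacency
relation.\<close>

definition contains_induced ::
  "'a set \<Rightarrow> ('a \<Rightarrow> 'a \<Rightarrow> bool) \<Rightarrow> 'b set \<Rightarrow> ('b \<Rightarrow> 'b \<Rightarrow> bool) \<Rightarrow> bool" where
  "contains_induced V adj W adjH \<longleftrightarrow>
     (\<exists>f. inj_on f W \<and> f ` W \<subseteq> V \<and>
          (\<forall>x\<in>W. \<forall>y\<in>W. adjH x y \<longleftrightarrow> adj (f x) (f y)))"

definition H_free ::
  "'a set \<Rightarrow> ('a \<Rightarrow> 'a \<Rightarrow> bool) \<Rightarrow> 'b set \<Rightarrow> ('b \<Rightarrow> 'b \<Rightarrow> bool) \<Rightarrow> bool" where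
  "H_free V adj W adjH \<longleftrightarrow> \<not> contains_induced V adj W adjH"

definition P2P4_V :: "nat set" where "P2P4_V = {0..5}"

definition P2P4_adj :: "nat \<Rightarrow> nat \<Rightarrow> bool" where
  "P2P4_adj x y \<longleftrightarrow> {x, y} \<in> {{0,1}, {2,3}, {3,4}, {4,5}}"

text \<open>Vertices of G_H: element vertices q, hyperedge vertices S_j, copies S'_j, t1, t2.\<close>
datatype 'a gvert = Qv 'a | Sv nat | Sv' nat | T1 | T2

text \<open>Hypergraph: element set Q, hyperedges S_1..S_n given by E :: nat => 'a set.\<close>
definition GH_V :: "'a set \<Rightarrow> nat \<Rightarrow> 'a gvert set" where
  "GH_V Q n = Qv ` Q \<union> Sv ` {1..n} \<union> Sv' ` {1..n} \<union> {T1, T2}"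

fun GH_edge :: "'a set \<Rightarrow> (nat \<Rightarrow> 'a set) \<Rightarrow> nat \<Rightarrow> 'a gvert \<Rightarrow> 'a gvert \<Rightarrow> bool" where
  "GH_edge Q E n (Qv x) (Sv j) = (x \<in> Q \<and> j \<in> {1..n} \<and> x \<in> E j)"
| "GH_edge Q E n (Qv x) (Sv' j) = (x \<in> Q \<and> j \<in> {1..n} \<and> x \<in> E j)"
| "GH_edge Q E n (Sv j) (Sv' l) = (j \<in> {1..n} \<and> l \<in> {1..n})"
| "GH_edge Q E n (Qv x) (Qv y) = (x \<in> Q \<and> y \<in> Q \<and> x \<noteq> y)"
| "GH_edge Q E n T1 (Sv j) = (j \<in> {1..n})"
| "GH_edge Q E n T2 (Sv' j) = (j \<in> {1..n})"
| "GH_edge Q E n _ _ = False"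

definition GH_adj :: "'a set \<Rightarrow> (nat \<Rightarrow> 'a set) \<Rightarrow> nat \<Rightarrow> 'a gvert \<Rightarrow> 'a gvert \<Rightarrow> bool" where
  "GH_adj Q E n u v \<longleftrightarrow> GH_edge Q E n u v \<or> GH_edge Q E n v u"

definition GH'_adj :: "'a set \<Rightarrow> (nat \<Rightarrow> 'a set) \<Rightarrow> nat \<Rightarrow> 'a gvert \<Rightarrow> 'a gvert \<Rightarrow> bool" where
  "GH'_adj Q E n u v \<longleftrightarrow> GH_adj Q E n u v \<or> {u, v} = {T1, T2}"

end

theory Submission
  imports Defs
begin

text \<open>Outside the element vertices, \<open>G'\<^sub>\<H>\<close> is the complete bipartite graph with
sides \<open>\<S> \<union> {t\<^sub>2}\<close> and \<open>\<S>' \<union> {t\<^sub>1}\<close>, while the element vertices form a clique. In an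
induced \<open>P\<^sub>2 + P\<^sub>4\<close>, if the \<open>P\<^sub>2\<close> meets the clique then the \<open>P\<^sub>4\<close> avoids it and would
be an induced \<open>P\<^sub>4\<close> of a complete bipartite graph, whose ends lie on opposite sides
and hence are adjacent. Otherwise the \<open>P\<^sub>2\<close> has one end on each side, so every other
bipartite vertex is adjacent to it; the \<open>P\<^sub>4\<close> then lies in the clique, again
impossible.\<close>

lemma contains_induced_P2P4E:
  assumes "contains_induced V adj P2P4_V P2P4_adj"
  obtains f where "\<And>i. i \<le> 5 \<Longrightarrow> f i \<in> V"
    and "\<And>i j. i \<le> 5 \<Longrightarrow> j \<le> 5 \<Longrightarrow> i \<noteq> j \<Longrightarrow> f i \<noteq> f j"
    and "\<And>i j. i \<le> 5 \<Longrightarrow> j \<le> 5 \<Longrightarrow> adj (f i) (f j) \<longleftrightarrow> P2P4_adj i j"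
proof -
  from assms obtain f where "inj_on f {0..5}" "f ` {0..5} \<subseteq> V"
    and "\<forall>x\<in>{0..5}. \<forall>y\<in>{0..5}. P2P4_adj x y \<longleftrightarrow> adj (f x) (f y)"
    unfolding contains_induced_def P2P4_V_def by blast
  then show thesis
    by (intro that[of f]) (auto simp: inj_on_def)
qed

lemma P2P4_free_clique_join_complete_bipartite:
  fixes adj :: "'a \<Rightarrow> 'a \<Rightarrow> bool" and K side :: "'a \<Rightarrow> bool"
  assumes clique: "\<And>u v. u \<in> V \<Longrightarrow> v \<in> V \<Longrightarrow> K u \<Longrightarrow> K v \<Longrightarrow> u \<noteq> v \<Longrightarrow> adj u v"
    and bipartite: "\<And>u v. u \<in> V \<Longrightarrow> v \<in> V \<Longrightarrow> \<not> K u \<Longrightarrow> \<not> K v \<Longrightarrow>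
                      adj u v \<longleftrightarrow> side u \<noteq> side v"
  shows "H_free V adj P2P4_V P2P4_adj"
  unfolding H_free_def
proof
  assume "contains_induced V adj P2P4_V P2P4_adj"
  then obtain f where V: "\<And>i. i \<le> 5 \<Longrightarrow> f i \<in> V"
    and distinct: "\<And>i j. i \<le> 5 \<Longrightarrow> j \<le> 5 \<Longrightarrow> i \<noteq> j \<Longrightarrow> f i \<noteq> f j"
    and adj: "\<And>i j. i \<le> 5 \<Longrightarrow> j \<le> 5 \<Longrightarrow> adj (f i) (f j) \<longleftrightarrow> P2P4_adj i j"
    by (rule contains_induced_P2P4E) blast
  have P2_P4_apart: "\<not> adj (f i) (f j)" if "i \<le> 1" "2 \<le> j" "j \<le> 5" for i j
    using adj[of i j] that by (auto simp: P2P4_adj_def doubleton_eq_iff)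
  have P4_ends_apart: "\<not> adj (f 2) (f 5)" and P4_gap: "\<not> adj (f 2) (f 4)"
    using adj[of 2 5] adj[of 2 4] by (auto simp: P2P4_adj_def doubleton_eq_iff)
  have P4_edges: "adj (f 2) (f 3)" "adj (f 3) (f 4)" "adj (f 4) (f 5)"
    using adj[of 2 3] adj[of 3 4] adj[of 4 5] by (simp_all add: P2P4_adj_def)
  show False
  proof (cases "K (f 0) \<or> K (f 1)")
    case True
    then obtain i where i: "i \<le> 1" "K (f i)"
      by (metis le_numeral_extra(4) zero_le)
    have P4_outside: "\<not> K (f j)" if "2 \<le> j" "j \<le> 5" for j
      using clique[OF V V i(2) _ distinct, of j] P2_P4_apart[OF i(1) that] that i(1) by auto
    show False
      using bipartite[OF V V P4_outside P4_outside, of 2 3] bipartite[OF V V P4_outside P4_outside, of 3 4]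
        bipartite[OF V V P4_outside P4_outside, of 4 5] bipartite[OF V V P4_outside P4_outside, of 2 5]
        P4_edges P4_ends_apart by simp
  next
    case False
    then have P2_sides: "side (f 0) \<noteq> side (f 1)"
      using bipartite[OF V V, of 0 1] adj[of 0 1] by (simp add: P2P4_adj_def)
    have P4_inside: "K (f j)" if "2 \<le> j" "j \<le> 5" for j
    proof (rule ccontr)
      assume "\<not> K (f j)"
      then show False
        using bipartite[OF V V, of 0 j] bipartite[OF V V, of 1 j] that False P2_sides
          P2_P4_apart[of 0 j] P2_P4_apart[of 1 j] by auto
    qed
    show False
      using clique[OF V V P4_inside P4_inside distinct, of 2 4] P4_gap by simp
  qed
qed

fun is_Qv :: "'a gvert \<Rightarrow> bool" where
  "is_Qv (Qv _) = True"
| "is_Qv _ = False"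

fun on_S_side :: "'a gvert \<Rightarrow> bool" where
  "on_S_side (Sv _) = True"
| "on_S_side T2 = True"
| "on_S_side _ = False"

lemma GH'_adj_Qv:
  assumes "u \<in> GH_V Q n" "v \<in> GH_V Q n" "is_Qv u" "is_Qv v" "u \<noteq> v"
  shows "GH'_adj Q E n u v"
  using assms by (cases u; cases v; auto simp: GH_V_def GH'_adj_def GH_adj_def)

lemma GH'_adj_not_Qv:
  assumes "u \<in> GH_V Q n" "v \<in> GH_V Q n" "\<not> is_Qv u" "\<not> is_Qv v"
  shows "GH'_adj Q E n u v \<longleftrightarrow> on_S_side u \<noteq> on_S_side v"
  using assms by (cases u; cases v; auto simp: GH_V_def GH'_adj_def GH_adj_def)

theorem lemma34:
  fixes Q :: "'a set" and E :: "nat \<Rightarrow> 'a set" and n :: nat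
  assumes "finite Q" and "n \<ge> 1"
    and "\<forall>j\<in>{1..n}. E j \<subseteq> Q \<and> E j \<noteq> {}"
    and "E n = Q"
  shows "H_free (GH_V Q n) (GH'_adj Q E n) P2P4_V P2P4_adj"
  using GH'_adj_Qv GH'_adj_not_Qv by (rule P2P4_free_clique_join_complete_bipartite)

end
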